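(* Let $\mathcal G$ be a class of graphs that is closed under taking blowups and is $\chi$-bounded with $\chi$-bounding function $g(n) = c\cdot n$ for some $c\in \mathbb R$ (that is, every induced subgraph $H$ of a graph in $\mathcal G$ satisfies $\chi(H)\leq c\,\omega(H)$). Then $\mathcal G$ is local-fractionally $\chi$-bounded by $g$: for every $G\in\mathcal G$, every induced subgraph $H$ of $G$, and every demand function $f$ for $H$ with $f(v)\leq 1/g(\omega(v))$ for each $v\in V(H)$, the graph $H$ has an $f$-coloring.
   Context: $\omega(v)$ denotes the size of a largest clique in $H[N[v]]$, where $N[v]$ is the closed neighborhood of $v$. A blowup of a graph $F$ is obtained by replacing vertices $x$ by pairwise disjoint cliques $Q_x$ and making every vertex of $Q_x$ adjacent to every vertex of $Q_y$ whenever $xy\in E(F)$. A demand function for $H$ is a function $f: V(H)\to [0,1]\cap\mathbb{Q}$. A fractional coloring of $H$ assigns to each vertex a measurable subset of $[0,1]$ so that adjacent vertices receive disjoint sets; an $f$-coloring is a fractional coloring $\phi$ with Lebesgue measure of $\phi(v)$ at least $f(v)$ for every $v$. *)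

theory Defs
  imports "HOL-Analysis.Analysis"
begin

definition is_graph :: "nat set \<Rightarrow> (nat \<times> nat) set \<Rightarrow> bool" where
  "is_graph V E \<longleftrightarrow> finite V \<and> E \<subseteq> V \<times> V \<and> sym E \<and> irrefl E"

definition induced_edges :: "(nat \<times> nat) set \<Rightarrow> nat set \<Rightarrow> (nat \<times> nat) set" where
  "induced_edges E S = E \<inter> (S \<times> S)"

definition is_clique :: "(nat \<times> nat) set \<Rightarrow> nat set \<Rightarrow> bool" where
  "is_clique E K \<longleftrightarrow> (\<forall>u\<in>K. \<forall>w\<in>K. u \<noteq> w \<longrightarrow> (u, w) \<in> E)"

definition clique_number :: "nat set \<Rightarrow> (nat \<times> nat) set \<Rightarrow> nat" where
  "clique_number V E = Max {card K | K. K \<subseteq> V \<and> is_clique E K}"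

definition chromatic_number :: "nat set \<Rightarrow> (nat \<times> nat) set \<Rightarrow> nat" where
  "chromatic_number V E = (LEAST k. \<exists>col :: nat \<Rightarrow> nat.
      (\<forall>v\<in>V. col v < k) \<and> (\<forall>u\<in>V. \<forall>w\<in>V. (u, w) \<in> E \<longrightarrow> col u \<noteq> col w))"

definition closed_nbhd :: "nat set \<Rightarrow> (nat \<times> nat) set \<Rightarrow> nat \<Rightarrow> nat set" where
  "closed_nbhd V E v = insert v {u \<in> V. (v, u) \<in> E}"

definition local_omega :: "nat set \<Rightarrow> (nat \<times> nat) set \<Rightarrow> nat \<Rightarrow> nat" where
  "local_omega V E v =
     clique_number (closed_nbhd V E v) (induced_edges E (closed_nbhd V E v))"

text \<open>(VB,EB) is (isomorphic to) a blowup of (VF,EF): there is a surjection p from VB onto VF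
  whose fibres are the (nonempty, pairwise disjoint) cliques Q_x, and two vertices in distinct
  fibres are adjacent iff their images are adjacent in F.\<close>
definition is_blowup :: "nat set \<Rightarrow> (nat \<times> nat) set \<Rightarrow> nat set \<Rightarrow> (nat \<times> nat) set \<Rightarrow> bool" where
  "is_blowup VF EF VB EB \<longleftrightarrow> (\<exists>p :: nat \<Rightarrow> nat. p ` VB = VF \<and>
     (\<forall>u\<in>VB. \<forall>w\<in>VB. u \<noteq> w \<longrightarrow> ((u, w) \<in> EB \<longleftrightarrow> (p u = p w \<or> (p u, p w) \<in> EF))))"

definition demand_function :: "nat set \<Rightarrow> (nat \<Rightarrow> real) \<Rightarrow> bool" where
  "demand_function S f \<longleftrightarrow> (\<forall>v\<in>S. f v \<in> \<rat> \<and> 0 \<le> f v \<and> f v \<le> 1)"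

definition f_coloring :: "nat set \<Rightarrow> (nat \<times> nat) set \<Rightarrow> (nat \<Rightarrow> real) \<Rightarrow> (nat \<Rightarrow> real set) \<Rightarrow> bool" where
  "f_coloring V E f \<phi> \<longleftrightarrow>
     (\<forall>v\<in>V. \<phi> v \<in> sets lebesgue \<and> \<phi> v \<subseteq> {0..1} \<and> measure lebesgue (\<phi> v) \<ge> f v) \<and>
     (\<forall>u\<in>V. \<forall>w\<in>V. (u, w) \<in> E \<longrightarrow> \<phi> u \<inter> \<phi> w = {})"

end

theory Submission
  imports Defs "HOL-Library.Nat_Bijection"
begin

text \<open>Let \<open>M\<close> be a common multiple of the local clique numbers \<open>\<omega>(v)\<close> of \<open>H\<close> and blow up each
  vertex \<open>v\<close> of \<open>H\<close> into a clique of \<open>M / \<omega>(v)\<close> vertices; the blowup is an induced subgraph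
  of a blowup of \<open>G\<close>. A clique of it projects onto a clique \<open>P\<close> of \<open>H\<close> and every \<open>v \<in> P\<close>
  has \<open>\<omega>(v) \<ge> |P|\<close>, so the clique has at most \<open>\<Sum>v\<in>P. M / \<omega>(v) \<le> M\<close> vertices. Hence the
  blowup has a proper colouring with \<open>k \<le> c M\<close> colours, under which the fibre of \<open>v\<close> receives
  \<open>M / \<omega>(v)\<close> distinct colours. Assigning to \<open>v\<close> the union of the intervals
  \<open>[j / k, (j + 1) / k)\<close> over the colours \<open>j\<close> of its fibre gives a set of measure
  \<open>M / (\<omega>(v) k) \<ge> 1 / (c \<omega>(v))\<close>, and adjacent vertices receive disjoint sets.\<close>

definition colour_interval :: "nat \<Rightarrow> nat \<Rightarrow> real set" where
  "colour_interval k j = {real j / real k ..< (real j + 1) / real k}"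

lemma disjoint_colour_interval:
  assumes "k > 0" "i \<noteq> j"
  shows "colour_interval k i \<inter> colour_interval k j = {}"
proof -
  have "real i < real j + 1 \<and> real j < real i + 1"
    if "x \<in> colour_interval k i" "x \<in> colour_interval k j" for x
    using that assms(1) by (auto simp: colour_interval_def field_simps)
  then show ?thesis using assms(2) by fastforce
qed

lemma colour_interval_subset:
  assumes "j < k"
  shows "colour_interval k j \<subseteq> {0..1}"
proof -
  have "(real j + 1) / real k \<le> 1" using assms by simp
  then show ?thesis by (simp add: colour_interval_def atLeastLessThan_subseteq_atLeastAtMost_iff)
qed

lemma measure_UN_colour_interval:
  assumes "k > 0" "finite C"
  shows "(\<Union>j\<in>C. colour_interval k j) \<in> sets lebesgue"
    and "measure lebesgue (\<Union>j\<in>C. colour_interval k j) = real (card C) / real k"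
proof -
  have borel: "(\<Union>j\<in>C. colour_interval k j) \<in> sets lborel"
    using assms(2) by (auto simp: colour_interval_def)
  then show "(\<Union>j\<in>C. colour_interval k j) \<in> sets lebesgue" by simp
  have "measure lborel (\<Union>j\<in>C. colour_interval k j) = (\<Sum>j\<in>C. measure lborel (colour_interval k j))"
    using assms disjoint_colour_interval[OF assms(1)]
    by (intro measure_finite_Union)
       (auto simp: colour_interval_def disjoint_family_on_def divide_right_mono)
  also have "\<dots> = (\<Sum>j\<in>C. 1 / real k)"
    using assms(1) by (intro sum.cong) (auto simp: colour_interval_def field_simps divide_right_mono)
  finally show "measure lebesgue (\<Union>j\<in>C. colour_interval k j) = real (card C) / real k"
    using borel by simp
qed

lemma f_coloring_colour_interval_sets:
  assumes "k > 0"
    and colours: "\<And>v. v \<in> V \<Longrightarrow> C v \<subseteq> {..<k}"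
    and disjoint: "\<And>u w. u \<in> V \<Longrightarrow> w \<in> V \<Longrightarrow> (u, w) \<in> E \<Longrightarrow> C u \<inter> C w = {}"
    and demand: "\<And>v. v \<in> V \<Longrightarrow> f v \<le> real (card (C v)) / real k"
  shows "f_coloring V E f (\<lambda>v. \<Union>j\<in>C v. colour_interval k j)"
  unfolding f_coloring_def
proof (intro conjI ballI impI)
  fix v assume "v \<in> V"
  then have "finite (C v)" using colours finite_nat_iff_bounded by blast
  note meas = measure_UN_colour_interval[OF \<open>k > 0\<close> this]
  show "(\<Union>j\<in>C v. colour_interval k j) \<in> sets lebesgue" by (fact meas(1))
  show "f v \<le> measure lebesgue (\<Union>j\<in>C v. colour_interval k j)"
    using demand[OF \<open>v \<in> V\<close>] meas(2) by simp
  show "(\<Union>j\<in>C v. colour_interval k j) \<subseteq> {0..1}"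
    using colours[OF \<open>v \<in> V\<close>] colour_interval_subset by blast
next
  fix u w assume "u \<in> V" "w \<in> V" "(u, w) \<in> E"
  then have "colour_interval k i \<inter> colour_interval k j = {}" if "i \<in> C u" "j \<in> C w" for i j
    using disjoint that by (intro disjoint_colour_interval[OF \<open>k > 0\<close>]) blast
  then show "(\<Union>j\<in>C u. colour_interval k j) \<inter> (\<Union>j\<in>C w. colour_interval k j) = {}"
    by blast
qed

lemma finite_clique_sizes: "finite W \<Longrightarrow> finite {card K | K. K \<subseteq> W \<and> is_clique F K}"
  by (rule finite_subset[of _ "card ` Pow W"]) auto

lemma card_le_clique_number:
  "finite W \<Longrightarrow> K \<subseteq> W \<Longrightarrow> is_clique F K \<Longrightarrow> card K \<le> clique_number W F"
  unfolding clique_number_def by (rule Max_ge[OF finite_clique_sizes]) auto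

lemma clique_number_le:
  assumes "finite W" "\<And>K. K \<subseteq> W \<Longrightarrow> is_clique F K \<Longrightarrow> card K \<le> m"
  shows "clique_number W F \<le> m"
proof -
  have "is_clique F {}" by (simp add: is_clique_def)
  then show ?thesis
    using assms unfolding clique_number_def by (subst Max_le_iff[OF finite_clique_sizes]) auto
qed

lemma card_le_local_omega:
  assumes "finite S" "K \<subseteq> S" "is_clique F K" "v \<in> K"
  shows "card K \<le> local_omega S F v"
proof -
  let ?N = "closed_nbhd S F v"
  have "finite ?N" using assms(1) by (simp add: closed_nbhd_def)
  moreover have "K \<subseteq> ?N" using assms(2-4) by (auto simp: closed_nbhd_def is_clique_def)
  moreover have "is_clique (induced_edges F ?N) K"
    using assms(3) \<open>K \<subseteq> ?N\<close> by (auto simp: is_clique_def induced_edges_def)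
  ultimately show ?thesis unfolding local_omega_def by (rule card_le_clique_number)
qed

lemma local_omega_pos: "finite S \<Longrightarrow> v \<in> S \<Longrightarrow> 0 < local_omega S F v"
  using card_le_local_omega[of S "{v}" F v] by (simp add: is_clique_def)

lemma is_graph_induced: "is_graph V E \<Longrightarrow> S \<subseteq> V \<Longrightarrow> is_graph S (induced_edges E S)"
  by (auto simp: is_graph_def induced_edges_def sym_def irrefl_def intro: finite_subset)

definition proper_colouring :: "nat set \<Rightarrow> (nat \<times> nat) set \<Rightarrow> nat \<Rightarrow> (nat \<Rightarrow> nat) \<Rightarrow> bool" where
  "proper_colouring V E k col \<longleftrightarrow>
     (\<forall>v\<in>V. col v < k) \<and> (\<forall>u\<in>V. \<forall>w\<in>V. (u, w) \<in> E \<longrightarrow> col u \<noteq> col w)"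

lemma chromatic_number_colouring:
  assumes "finite V" "irrefl E"
  obtains col where "proper_colouring V E (chromatic_number V E) col"
proof -
  have "proper_colouring V E (Suc (Max V)) id"
    using assms by (auto simp: proper_colouring_def irrefl_def le_imp_less_Suc)
  then have "\<exists>k col. proper_colouring V E k col" by blast
  then have "\<exists>col. proper_colouring V E (LEAST k. \<exists>col. proper_colouring V E k col) col"
    by (rule LeastI_ex)
  moreover have "chromatic_number V E = (LEAST k. \<exists>col. proper_colouring V E k col)"
    unfolding chromatic_number_def proper_colouring_def ..
  ultimately show ?thesis using that by auto
qed

lemma inj_on_clique_proper_colouring:
  assumes "proper_colouring V E k col" "K \<subseteq> V" "is_clique E K"
  shows "inj_on col K"
  using assms unfolding inj_on_def proper_colouring_def is_clique_def by (meson subsetD)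

text \<open>Graphs have natural-number vertices, so the \<open>i\<close>-th copy of \<open>v\<close> in a blowup is the
  vertex \<open>prod_encode (v, i)\<close>.\<close>

definition blowup_fibre :: "(nat \<Rightarrow> nat) \<Rightarrow> nat \<Rightarrow> nat set" where
  "blowup_fibre n v = (\<lambda>i. prod_encode (v, i)) ` {..<n v}"

definition blowup_vertices :: "nat set \<Rightarrow> (nat \<Rightarrow> nat) \<Rightarrow> nat set" where
  "blowup_vertices V n = (\<Union>v\<in>V. blowup_fibre n v)"

definition blowup_base :: "nat \<Rightarrow> nat" where
  "blowup_base a = fst (prod_decode a)"

definition blowup_edges :: "nat set \<Rightarrow> (nat \<times> nat) set \<Rightarrow> (nat \<Rightarrow> nat) \<Rightarrow> (nat \<times> nat) set" where
  "blowup_edges V E n = {(a, b). a \<in> blowup_vertices V n \<and> b \<in> blowup_vertices V n \<and> a \<noteq> b \<and>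
     (blowup_base a = blowup_base b \<or> (blowup_base a, blowup_base b) \<in> E)}"

lemma blowup_base_fibre: "a \<in> blowup_fibre n v \<Longrightarrow> blowup_base a = v"
  by (auto simp: blowup_fibre_def blowup_base_def)

lemma card_blowup_fibre: "card (blowup_fibre n v) = n v"
  unfolding blowup_fibre_def by (subst card_image) (auto simp: inj_on_def)

lemma finite_blowup_vertices: "finite V \<Longrightarrow> finite (blowup_vertices V n)"
  by (simp add: blowup_vertices_def blowup_fibre_def)

lemma card_blowup_vertices: "finite V \<Longrightarrow> card (blowup_vertices V n) = (\<Sum>v\<in>V. n v)"
  unfolding blowup_vertices_def using card_blowup_fibre
  by (subst card_UN_disjoint) (auto simp: blowup_fibre_def)

lemma is_graph_blowup:
  assumes "finite V" "sym E"
  shows "is_graph (blowup_vertices V n) (blowup_edges V E n)"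
  using assms
  by (auto simp: is_graph_def blowup_edges_def blowup_vertices_def blowup_fibre_def sym_def irrefl_def)

lemma is_blowup_blowup:
  assumes "\<And>v. v \<in> V \<Longrightarrow> 0 < n v"
  shows "is_blowup V E (blowup_vertices V n) (blowup_edges V E n)"
  unfolding is_blowup_def
proof (intro exI[of _ blowup_base] conjI ballI impI)
  have "prod_encode (v, 0) \<in> blowup_fibre n v" if "v \<in> V" for v
    using assms[OF that] by (simp add: blowup_fibre_def)
  then show "blowup_base ` blowup_vertices V n = V"
    by (force simp: blowup_vertices_def blowup_base_fibre)
qed (auto simp: blowup_edges_def)

lemma induced_edges_blowup:
  assumes "S \<subseteq> V"
  shows "induced_edges (blowup_edges V E n) (blowup_vertices S n) = blowup_edges S (induced_edges E S) n"
  using assms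
  by (auto simp: induced_edges_def blowup_edges_def blowup_vertices_def dest: blowup_base_fibre)

lemma clique_number_blowup_le:
  assumes "finite S" and weights: "\<And>v. v \<in> S \<Longrightarrow> n v * local_omega S F v \<le> M"
  shows "clique_number (blowup_vertices S n) (blowup_edges S F n) \<le> M"
proof (rule clique_number_le[OF finite_blowup_vertices[OF \<open>finite S\<close>]])
  fix K assume K: "K \<subseteq> blowup_vertices S n" "is_clique (blowup_edges S F n) K"
  define P where "P = blowup_base ` K"
  have "P \<subseteq> S" using K(1) by (auto simp: P_def blowup_vertices_def dest: blowup_base_fibre)
  then have "finite P" using \<open>finite S\<close> finite_subset by blast
  have "is_clique F P"
    using K(2) by (fastforce simp: is_clique_def P_def blowup_edges_def)
  have "K \<subseteq> blowup_vertices P n"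
    using K(1) by (auto simp: P_def blowup_vertices_def dest: blowup_base_fibre)
  then have "card K \<le> (\<Sum>v\<in>P. n v)"
    using \<open>finite P\<close> card_mono finite_blowup_vertices card_blowup_vertices by metis
  moreover have "(\<Sum>v\<in>P. n v) \<le> M"
  proof (cases "P = {}")
    case False
    have "card P * (\<Sum>v\<in>P. n v) = (\<Sum>v\<in>P. n v * card P)"
      by (simp add: sum_distrib_left mult.commute)
    also have "\<dots> \<le> (\<Sum>v\<in>P. n v * local_omega S F v)"
      using card_le_local_omega[OF \<open>finite S\<close> \<open>P \<subseteq> S\<close> \<open>is_clique F P\<close>]
      by (intro sum_mono) simp
    also have "\<dots> \<le> card P * M"
      using sum_bounded_above[of P "\<lambda>v. n v * local_omega S F v" M] weights \<open>P \<subseteq> S\<close> by auto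
    finally show ?thesis
      using False \<open>finite P\<close> by (simp add: card_gt_0_iff)
  qed simp
  ultimately show "card K \<le> M" by linarith
qed

lemma f_coloring_from_blowup_colouring:
  assumes "k > 0" "irrefl F"
    and col: "proper_colouring (blowup_vertices S n) (blowup_edges S F n) k col"
    and demand: "\<And>v. v \<in> S \<Longrightarrow> f v \<le> real (n v) / real k"
  shows "f_coloring S F f (\<lambda>v. \<Union>j\<in>col ` blowup_fibre n v. colour_interval k j)"
proof (rule f_coloring_colour_interval_sets[OF \<open>k > 0\<close>])
  fix v assume "v \<in> S"
  then have fibre: "blowup_fibre n v \<subseteq> blowup_vertices S n"
    by (auto simp: blowup_vertices_def)
  then show "col ` blowup_fibre n v \<subseteq> {..<k}"
    using col by (auto simp: proper_colouring_def)
  have "is_clique (blowup_edges S F n) (blowup_fibre n v)"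
    using fibre by (auto simp: is_clique_def blowup_edges_def blowup_base_fibre)
  then have "card (col ` blowup_fibre n v) = n v"
    using inj_on_clique_proper_colouring[OF col fibre] card_image card_blowup_fibre by metis
  then show "f v \<le> real (card (col ` blowup_fibre n v)) / real k"
    using demand[OF \<open>v \<in> S\<close>] by simp
next
  fix u w assume "u \<in> S" "w \<in> S" "(u, w) \<in> F"
  have "(a, b) \<in> blowup_edges S F n" if "a \<in> blowup_fibre n u" "b \<in> blowup_fibre n w" for a b
  proof -
    have "blowup_base a = u" "blowup_base b = w" using that by (simp_all add: blowup_base_fibre)
    moreover have "u \<noteq> w" using \<open>(u, w) \<in> F\<close> \<open>irrefl F\<close> by (auto simp: irrefl_def)
    ultimately show ?thesis
      using that \<open>u \<in> S\<close> \<open>w \<in> S\<close> \<open>(u, w) \<in> F\<close> by (auto simp: blowup_edges_def blowup_vertices_def)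
  qed
  then show "col ` blowup_fibre n u \<inter> col ` blowup_fibre n w = {}"
    using col \<open>u \<in> S\<close> \<open>w \<in> S\<close>
    by (fastforce simp: proper_colouring_def blowup_vertices_def)
qed

lemma common_multiple_weights:
  fixes w :: "nat \<Rightarrow> nat"
  assumes "finite S" "\<And>v. v \<in> S \<Longrightarrow> 0 < w v"
  obtains n M where "\<And>v. 0 < n v" "\<And>v. v \<in> S \<Longrightarrow> n v * w v = M"
proof
  define M where "M = (\<Prod>v\<in>S. w v)"
  have "0 < M" using assms by (simp add: M_def)
  have "w v dvd M" if "v \<in> S" for v
    using assms(1) that by (simp add: M_def dvd_prodI)
  then show "(if v \<in> S then M div w v else 1) * w v = M" if "v \<in> S" for v
    using that by simp
  show "0 < (if v \<in> S then M div w v else 1)" for v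
    using \<open>0 < M\<close> assms(2) \<open>\<And>v. v \<in> S \<Longrightarrow> w v dvd M\<close>
    by (simp add: div_greater_zero_iff dvd_imp_le)
qed

lemma f_coloring_from_chi_bounded_blowup:
  fixes c :: real
  assumes "is_graph S F"
    and weights: "\<And>v. 0 < n v" "\<And>v. v \<in> S \<Longrightarrow> n v * local_omega S F v = M"
    and chi_bounded: "real (chromatic_number (blowup_vertices S n) (blowup_edges S F n))
                        \<le> c * real (clique_number (blowup_vertices S n) (blowup_edges S F n))"
    and demand: "\<And>v. v \<in> S \<Longrightarrow> f v \<le> 1 / (c * real (local_omega S F v))"
  shows "\<exists>\<phi>. f_coloring S F f \<phi>"
proof (cases "S = {}")
  case True
  then show ?thesis by (simp add: f_coloring_def)
next
  case False
  then obtain v0 where "v0 \<in> S" by blast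
  have "finite S" "sym F" "irrefl F" using \<open>is_graph S F\<close> by (simp_all add: is_graph_def)
  let ?B = "blowup_vertices S n" and ?EB = "blowup_edges S F n"
  define k where "k = chromatic_number ?B ?EB"
  have "is_graph ?B ?EB" using \<open>finite S\<close> \<open>sym F\<close> by (rule is_graph_blowup)
  then obtain col where col: "proper_colouring ?B ?EB k col"
    unfolding k_def is_graph_def by (metis chromatic_number_colouring)
  have "prod_encode (v0, 0) \<in> ?B"
    using \<open>v0 \<in> S\<close> weights(1)[of v0] by (auto simp: blowup_vertices_def blowup_fibre_def)
  then have "0 < k" using col by (auto simp: proper_colouring_def)
  have "clique_number ?B ?EB \<le> M"
    using weights(2) by (intro clique_number_blowup_le[OF \<open>finite S\<close>]) simp
  have chi: "real k \<le> c * real (clique_number ?B ?EB)"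
    using chi_bounded by (simp add: k_def)
  with \<open>0 < k\<close> have "0 < c * real (clique_number ?B ?EB)" by linarith
  then have "0 < c" by (simp add: zero_less_mult_iff)
  have "real k \<le> c * real M"
    using chi \<open>clique_number ?B ?EB \<le> M\<close> \<open>0 < c\<close> by (meson mult_left_mono of_nat_mono order_trans less_imp_le)
  have "f v \<le> real (n v) / real k" if "v \<in> S" for v
  proof -
    have "real M = real (n v) * real (local_omega S F v)"
      using weights(2)[OF that] of_nat_mult by metis
    then have "1 / (c * real (local_omega S F v)) = real (n v) / (c * real M)"
      using weights(1)[of v] local_omega_pos[OF \<open>finite S\<close> that, of F] by simp
    also have "\<dots> \<le> real (n v) / real k"
      using \<open>real k \<le> c * real M\<close> \<open>0 < k\<close> by (intro divide_left_mono) auto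
    finally show ?thesis using demand[OF that] by linarith
  qed
  then show ?thesis using f_coloring_from_blowup_colouring[OF \<open>0 < k\<close> \<open>irrefl F\<close> col] by blast
qed

theorem theorem5p2:
  fixes \<G> :: "(nat set \<times> (nat \<times> nat) set) set" and c :: real
  assumes graphs: "\<And>V E. (V, E) \<in> \<G> \<Longrightarrow> is_graph V E"
    and blowup_closed: "\<And>V E VB EB. (V, E) \<in> \<G> \<Longrightarrow> is_graph VB EB \<Longrightarrow>
                          is_blowup V E VB EB \<Longrightarrow> (VB, EB) \<in> \<G>"
    and chi_bounded: "\<And>V E S. (V, E) \<in> \<G> \<Longrightarrow> S \<subseteq> V \<Longrightarrow>
         real (chromatic_number S (induced_edges E S))
           \<le> c * real (clique_number S (induced_edges E S))"
  shows "\<forall>V E S f. (V, E) \<in> \<G> \<longrightarrow> S \<subseteq> V \<longrightarrow> demand_function S f \<longrightarrow>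
           (\<forall>v\<in>S. f v \<le> 1 / (c * real (local_omega S (induced_edges E S) v))) \<longrightarrow>
           (\<exists>\<phi>. f_coloring S (induced_edges E S) f \<phi>)"
proof (intro allI impI)
  fix V E S f
  assume G: "(V, E) \<in> \<G>" and "S \<subseteq> V"
    and "demand_function S f" \<comment> \<open>not needed: the demands may be arbitrary reals\<close>
    and demand: "\<forall>v\<in>S. f v \<le> 1 / (c * real (local_omega S (induced_edges E S) v))"
  let ?H = "induced_edges E S"
  have "is_graph V E" using graphs G .
  then have "is_graph S ?H" using \<open>S \<subseteq> V\<close> by (rule is_graph_induced)
  then obtain n M where n: "\<And>v. 0 < n v" "\<And>v. v \<in> S \<Longrightarrow> n v * local_omega S ?H v = M"
    using common_multiple_weights[of S "local_omega S ?H"] local_omega_pos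
    unfolding is_graph_def by metis
  have "(blowup_vertices V n, blowup_edges V E n) \<in> \<G>"
    using \<open>is_graph V E\<close> n(1)
    by (intro blowup_closed[OF G] is_graph_blowup is_blowup_blowup) (auto simp: is_graph_def)
  moreover have "blowup_vertices S n \<subseteq> blowup_vertices V n"
    using \<open>S \<subseteq> V\<close> by (auto simp: blowup_vertices_def)
  ultimately have "real (chromatic_number (blowup_vertices S n) (blowup_edges S ?H n))
      \<le> c * real (clique_number (blowup_vertices S n) (blowup_edges S ?H n))"
    using chi_bounded induced_edges_blowup[OF \<open>S \<subseteq> V\<close>] by metis
  then show "\<exists>\<phi>. f_coloring S ?H f \<phi>"
    using f_coloring_from_chi_bounded_blowup[OF \<open>is_graph S ?H\<close> n] demand by blast
qed

end
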